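(* Let $X,Y,I\subseteq\mathbb{R}^n$. Then $(X\cup Y)+I=(X+I)\cup(Y+I)$. If moreover $X$ and $Y$ are closed with $X\cup Y$ $\ell_1$-convex, and $I$ is an interval, then also $(X\cap Y)+I=(X+I)\cap(Y+I)$.
   Context: $+$ denotes Minkowski sum. A subset $Z\subseteq\mathbb{R}^n$ is $\ell_1$-convex if for all $z,z'\in Z$, with $D=\sum_i|z_i-z'_i|$, there is $\gamma\colon[0,D]\to Z$ with $\gamma(0)=z,\gamma(D)=z'$ and $\sum_i|\gamma_i(t)-\gamma_i(t')|=|t-t'|$ for all $t,t'$. An interval in $\mathbb{R}^n$ is a set $\prod_{i=1}^n I_i$ with each $I_i\subseteq\mathbb{R}$ a (possibly empty, possibly unbounded) interval. *)

theory Defs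
  imports "HOL-Analysis.Analysis" "HOL-Library.Set_Algebras"
begin

text \<open>Minkowski sum is the library's set_plus, written A + B (HOL-Library.Set_Algebras).
  R^n is modelled as real ^ 'n.\<close>

definition l1_dist :: "real ^ 'n \<Rightarrow> real ^ 'n \<Rightarrow> real" where
  "l1_dist x y = (\<Sum>i\<in>UNIV. \<bar>x $ i - y $ i\<bar>)"

definition l1_convex :: "(real ^ 'n) set \<Rightarrow> bool" where
  "l1_convex Z \<longleftrightarrow>
     (\<forall>z\<in>Z. \<forall>z'\<in>Z. \<exists>\<gamma> :: real \<Rightarrow> real ^ 'n.
        \<gamma> 0 = z \<and> \<gamma> (l1_dist z z') = z' \<and>
        (\<forall>t\<in>{0..l1_dist z z'}. \<gamma> t \<in> Z) \<and>
        (\<forall>t\<in>{0..l1_dist z z'}. \<forall>t'\<in>{0..l1_dist z z'}.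
            l1_dist (\<gamma> t) (\<gamma> t') = \<bar>t - t'\<bar>))"

text \<open>A real interval (possibly empty, possibly unbounded) is a set S of reals with
  the property is_interval S; an interval in R^n is a product of such.\<close>
definition box_interval :: "(real ^ 'n) set \<Rightarrow> bool" where
  "box_interval S \<longleftrightarrow>
     (\<exists>J :: 'n \<Rightarrow> real set. (\<forall>i. is_interval (J i)) \<and> S = {x. \<forall>i. x $ i \<in> J i})"

end

theory Submission
  imports Defs
begin

text \<open>Write \<open>p = x + a = y + b\<close> with \<open>x \<in> X\<close>, \<open>y \<in> Y\<close>, \<open>a, b \<in> I\<close>. An \<open>\<ell>\<^sub>1\<close>-geodesic
  from \<open>x\<close> to \<open>y\<close> inside \<open>X \<union> Y\<close> is connected and covered by the closed sets \<open>X\<close> and \<open>Y\<close>,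
  so it meets \<open>X \<inter> Y\<close> in a point \<open>g\<close>. Since \<open>g\<close> lies on a geodesic, every coordinate of \<open>g\<close> lies between those
  of \<open>x\<close> and \<open>y\<close>; hence every coordinate of \<open>p - g\<close> lies between those of \<open>a\<close> and \<open>b\<close>,
  and \<open>p - g \<in> I\<close> because \<open>I\<close> is a product of intervals.\<close>

lemma l1_dist_nonneg: "0 \<le> l1_dist x y"
  unfolding l1_dist_def by (simp add: sum_nonneg)

lemma dist_le_l1_dist: "dist x y \<le> l1_dist x y"
  using norm_le_l1_cart[of "x - y"] by (simp add: dist_norm l1_dist_def)

lemma l1_dist_diff_left: "l1_dist (p - x) (p - y) = l1_dist x y"
  unfolding l1_dist_def by (simp add: abs_minus_commute)

lemma l1_dist_between_coordinatewise:
  assumes "l1_dist x g + l1_dist g y = l1_dist x y"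
  shows "\<bar>x $ i - g $ i\<bar> + \<bar>g $ i - y $ i\<bar> = \<bar>x $ i - y $ i\<bar>"
proof -
  let ?excess = "\<lambda>i. \<bar>x $ i - g $ i\<bar> + \<bar>g $ i - y $ i\<bar> - \<bar>x $ i - y $ i\<bar>"
  have "sum ?excess UNIV = 0"
    using assms by (simp add: l1_dist_def sum_subtractf sum.distrib)
  moreover have "\<And>j. ?excess j \<ge> 0" by simp
  ultimately have "?excess i = 0"
    by (simp add: sum_nonneg_eq_0_iff)
  then show ?thesis by simp
qed

lemma box_interval_l1_between:
  assumes "box_interval I" and "a \<in> I" and "b \<in> I"
    and "l1_dist a c + l1_dist c b = l1_dist a b"
  shows "c \<in> I"
proof -
  obtain J where J: "\<And>i. is_interval (J i)" and I: "I = {x. \<forall>i. x $ i \<in> J i}"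
    using assms(1) unfolding box_interval_def by blast
  have "c $ i \<in> J i" for i
  proof -
    have ab: "a $ i \<in> J i" "b $ i \<in> J i" using assms(2,3) I by auto
    have "\<bar>a $ i - c $ i\<bar> + \<bar>c $ i - b $ i\<bar> = \<bar>a $ i - b $ i\<bar>"
      by (rule l1_dist_between_coordinatewise[OF assms(4)])
    then have "min (a $ i) (b $ i) \<le> c $ i \<and> c $ i \<le> max (a $ i) (b $ i)"
      by linarith
    moreover have "min (a $ i) (b $ i) \<in> J i" "max (a $ i) (b $ i) \<in> J i"
      using ab by (simp_all add: min_def max_def)
    ultimately show ?thesis
      using J[of i] unfolding is_interval_1 by blast
  qed
  then show ?thesis using I by blast
qed

lemma l1_isometry_continuous_on:
  assumes "\<forall>t\<in>S. \<forall>t'\<in>S. l1_dist (\<gamma> t) (\<gamma> t') = \<bar>t - t'\<bar>"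
  shows "continuous_on S \<gamma>"
proof (rule lipschitz_on_continuous_on)
  show "1-lipschitz_on S \<gamma>"
  proof (rule lipschitz_onI)
    fix t t' assume "t \<in> S" "t' \<in> S"
    then show "dist (\<gamma> t) (\<gamma> t') \<le> 1 * dist t t'"
      using assms dist_le_l1_dist[of "\<gamma> t" "\<gamma> t'"] by (simp add: dist_real_def)
  qed simp
qed

lemma l1_convex_Un_closed_between_point:
  assumes "closed X" "closed Y" "l1_convex (X \<union> Y)" "x \<in> X" "y \<in> Y"
  obtains g where "g \<in> X \<inter> Y" "l1_dist x g + l1_dist g y = l1_dist x y"
proof -
  define D where "D = l1_dist x y"
  obtain \<gamma> where \<gamma>0: "\<gamma> 0 = x" and \<gamma>D: "\<gamma> D = y"
    and path: "\<gamma> ` {0..D} \<subseteq> X \<union> Y"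
    and iso: "\<forall>t\<in>{0..D}. \<forall>t'\<in>{0..D}. l1_dist (\<gamma> t) (\<gamma> t') = \<bar>t - t'\<bar>"
    using assms(3-5) unfolding l1_convex_def D_def by blast
  have "0 \<le> D" unfolding D_def by (rule l1_dist_nonneg)
  then have ends: "x \<in> \<gamma> ` {0..D}" "y \<in> \<gamma> ` {0..D}"
    using \<gamma>0 \<gamma>D by force+
  have "connected (\<gamma> ` {0..D})"
    using connected_continuous_image[OF l1_isometry_continuous_on[OF iso]] by simp
  then have "\<gamma> ` {0..D} \<inter> X \<inter> Y \<noteq> {}"
    using path ends assms(1,2,4,5) unfolding connected_closed by blast
  then obtain t where t: "t \<in> {0..D}" and meet: "\<gamma> t \<in> X \<inter> Y" by blast
  have "l1_dist x (\<gamma> t) = t" "l1_dist (\<gamma> t) y = D - t"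
    using iso[rule_format, of 0 t] iso[rule_format, of t D] t \<open>0 \<le> D\<close>
    by (simp_all add: \<gamma>0 \<gamma>D)
  then have "l1_dist x (\<gamma> t) + l1_dist (\<gamma> t) y = l1_dist x y"
    by (simp add: D_def)
  with meet show thesis by (rule that)
qed

lemma set_plus_Int_box_interval:
  assumes "closed X" "closed Y" "l1_convex (X \<union> Y)" "box_interval I"
  shows "(X \<inter> Y) + I = (X + I) \<inter> (Y + I)"
proof
  show "(X + I) \<inter> (Y + I) \<subseteq> (X \<inter> Y) + I"
  proof
    fix p assume "p \<in> (X + I) \<inter> (Y + I)"
    then obtain x y where x: "x \<in> X" "p - x \<in> I" and y: "y \<in> Y" "p - y \<in> I"
      by (metis IntD1 IntD2 set_plus_elim add_diff_cancel_left')
    obtain g where g: "g \<in> X \<inter> Y" and "l1_dist x g + l1_dist g y = l1_dist x y"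
      using l1_convex_Un_closed_between_point[OF assms(1-3) x(1) y(1)] .
    then have "p - g \<in> I"
      using box_interval_l1_between[OF assms(4) x(2) y(2)] by (simp add: l1_dist_diff_left)
    then show "p \<in> (X \<inter> Y) + I"
      using g set_plus_intro[of g "X \<inter> Y" "p - g" I] by simp
  qed
qed (auto elim!: set_plus_elim)

theorem proposition2p4:
  fixes X Y I :: "(real ^ 'n) set"
  shows "(X \<union> Y) + I = (X + I) \<union> (Y + I) \<and>
         (closed X \<and> closed Y \<and> l1_convex (X \<union> Y) \<and> box_interval I \<longrightarrow>
           (X \<inter> Y) + I = (X + I) \<inter> (Y + I))"
  using Un_set_plus set_plus_Int_box_interval by blast

end
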